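(* Let $q>0$ and $\ell,\alpha\in\{0,1,2,\ldots\}$, and put $g_\ell(t)=\frac{\log^\ell(t+q)}{t+q}$ for $t\ge0$. Then $$\tilde\gamma_\ell(q)=\sum_{n=0}^{\alpha}(-1)^n\frac{\log^\ell(n+q)}{n+q}-(-1)^{\alpha}\frac{\log^\ell(\alpha+q)}{2(\alpha+q)}+\frac12\int_{\alpha}^\infty\overline E_0(-t)\,g_\ell'(t)\,dt,$$ where $g_\ell'$ is the derivative with respect to $t$. In particular, if $q\in\{1,2,3,\ldots\}$ and $\ell\in\{0,1,2,\ldots\}$, then $$\tilde\gamma_\ell(q)=\frac{\log^\ell q}{2q}+\frac{(-1)^q}{2}\sum_{j=q}^\infty(-1)^{j+1}\left(\frac{\log^\ell(j+1)}{j+1}-\frac{\log^\ell j}{j}\right).$$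
   Context: For $q>0$, $\zeta_E(z,q)=\sum_{n=0}^\infty (-1)^n (n+q)^{-z}$ for $\mathrm{Re}(z)>0$, extended by analytic continuation to an entire function of $z$. The modified Stieltjes constants $\tilde\gamma_k(q)$ are defined by the Taylor expansion $\zeta_E(z,q)=\sum_{k=0}^\infty\frac{(-1)^k\tilde\gamma_k(q)}{k!}(z-1)^k$. $\overline E_0$ is the quasi-periodic Euler function: $\overline E_0(t)=1$ for $0\le t<1$ and $\overline E_0(t+1)=-\overline E_0(t)$ for all real $t$. Convention: $\log^0 x=1$. *)

theory Defs
  imports "HOL-Complex_Analysis.Complex_Analysis"
begin

text \<open>Alternating Hurwitz zeta function: the entire function that agrees with
  sum_{n>=0} (-1)^n (n+q)^(-z) on Re z > 0 (unique by the identity theorem).\<close>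
definition zeta_E :: "real \<Rightarrow> complex \<Rightarrow> complex" where
  "zeta_E q = (THE f. f holomorphic_on UNIV \<and>
      (\<forall>z. Re z > 0 \<longrightarrow>
         (\<lambda>n. (-1) ^ n * (complex_of_real (real n + q)) powr (- z)) sums f z))"

text \<open>Modified Stieltjes constants: zeta_E(z,q) = sum_k (-1)^k gt_k(q)/k! (z-1)^k,
  i.e. gt_k(q) = (-1)^k times the k-th derivative of zeta_E(., q) at 1.\<close>
definition mod_stieltjes :: "nat \<Rightarrow> real \<Rightarrow> complex" where
  "mod_stieltjes k q = (-1) ^ k * (deriv ^^ k) (zeta_E q) 1"

definition E0bar :: "real \<Rightarrow> real" where
  "E0bar t = (if even \<lfloor>t\<rfloor> then 1 else -1)"

end

theory Submission
  imports Defs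
begin

text \<open>Write \<Delta>f(x) = f(x) - f(x + 1). Summation by parts gives
  \<Sum>(-1)^n f(n) = f(0)/2 + 1/2 \<Sum>(-1)^n \<Delta>f(n), and iterating this K times expresses
  zeta_E(z, q) through the series \<Sum>(-1)^n \<Delta>^K f(n) for f(x) = (x + q)^(-z). By the mean value
  theorem \<Delta>^K f(x) = O(x^(-Re z - K)), so this series converges locally uniformly on
  Re z > 1 - K, which gives the entire continuation and justifies termwise differentiation.
  Taking K = 1 and differentiating l times at z = 1 yields
  mod_stieltjes l q = g(0)/2 + 1/2 \<Sum>(-1)^n (g(n) - g(n + 1)) for g = g_l.
  Each summand is the integral of E0bar(-t) g'(t) over [n, n + 1], and g' is absolutely
  integrable on [0, \<infinity>) because g' \<le> 0 eventually and g tends to 0. Splitting the series at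
  \<alpha> gives the first formula; for integer q the second one is the same series, reindexed by
  j = n + q.\<close>

section \<open>Termwise differentiation of series of holomorphic functions\<close>

lemma holomorphic_on_suminf:
  fixes a :: "nat \<Rightarrow> complex \<Rightarrow> complex"
  assumes "open U" and holo: "\<And>n. a n holomorphic_on U"
    and bound: "\<And>x. x \<in> U \<Longrightarrow> \<exists>d M. 0 < d \<and> cball x d \<subseteq> U \<and> summable M \<and>
                   (\<forall>\<^sub>F n in sequentially. \<forall>y\<in>cball x d. norm (a n y) \<le> M n)"
  shows "(\<lambda>z. \<Sum>n. a n z) holomorphic_on U"
proof -
  have "\<exists>d>0. (\<lambda>z. \<Sum>n. a n z) holomorphic_on ball x d" if x: "x \<in> U" for x
  proof -
    obtain d M where d: "0 < d" "cball x d \<subseteq> U" and M: "summable M"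
      and le: "\<forall>\<^sub>F n in sequentially. \<forall>y\<in>cball x d. norm (a n y) \<le> M n"
      using bound[OF x] by blast
    have partial_sums: "\<forall>N. continuous_on (cball x d) (\<lambda>z. \<Sum>n<N. a n z) \<and>
        (\<lambda>z. \<Sum>n<N. a n z) holomorphic_on ball x d"
    proof
      fix N
      have "(\<lambda>z. \<Sum>n<N. a n z) holomorphic_on cball x d"
        using d by (intro holomorphic_intros holomorphic_on_subset[OF holo])
      then show "continuous_on (cball x d) (\<lambda>z. \<Sum>n<N. a n z) \<and>
          (\<lambda>z. \<Sum>n<N. a n z) holomorphic_on ball x d"
        by (meson ball_subset_cball holomorphic_on_imp_continuous_on holomorphic_on_subset)
    qed
    have "uniform_limit (cball x d) (\<lambda>N z. \<Sum>n<N. a n z) (\<lambda>z. \<Sum>n. a n z) sequentially"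
      by (rule Weierstrass_m_test_ev[OF le M])
    then obtain "(\<lambda>z. \<Sum>n. a n z) holomorphic_on ball x d"
      by (rule holomorphic_uniform_limit[OF always_eventually[OF partial_sums]]) auto
    with d show ?thesis by blast
  qed
  then have "(\<lambda>z. \<Sum>n. a n z) analytic_on U"
    unfolding analytic_on_def by blast
  then show ?thesis
    by (rule analytic_imp_holomorphic)
qed

lemma higher_deriv_sum:
  fixes a :: "nat \<Rightarrow> complex \<Rightarrow> complex"
  assumes "\<And>n. a n holomorphic_on U" "open U" "x \<in> U"
  shows "(deriv ^^ k) (\<lambda>z. \<Sum>n<N. a n z) x = (\<Sum>n<N. (deriv ^^ k) (a n) x)"
proof (induction N)
  case (Suc N)
  have "(deriv ^^ k) (\<lambda>z. (\<Sum>n<N. a n z) + a N z) x =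
      (deriv ^^ k) (\<lambda>z. \<Sum>n<N. a n z) x + (deriv ^^ k) (a N) x"
    using assms by (intro higher_deriv_add) (auto intro!: holomorphic_intros)
  then show ?case by (simp only: sum.lessThan_Suc Suc.IH)
qed simp

lemma higher_deriv_suminf_sums:
  fixes a :: "nat \<Rightarrow> complex \<Rightarrow> complex"
  assumes "open U" and holo: "\<And>n. a n holomorphic_on U"
    and bound: "\<And>x. x \<in> U \<Longrightarrow> \<exists>d M. 0 < d \<and> cball x d \<subseteq> U \<and> summable M \<and>
                   (\<forall>\<^sub>F n in sequentially. \<forall>y\<in>cball x d. norm (a n y) \<le> M n)"
    and x: "x \<in> U"
  shows "(\<lambda>n. (deriv ^^ k) (a n) x) sums (deriv ^^ k) (\<lambda>z. \<Sum>n. a n z) x"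
proof -
  obtain d M where d: "0 < d" "cball x d \<subseteq> U" and M: "summable M"
    and le: "\<forall>\<^sub>F n in sequentially. \<forall>y\<in>cball x d. norm (a n y) \<le> M n"
    using bound[OF x] by blast
  have "uniform_limit (cball x d) (\<lambda>N z. \<Sum>n<N. a n z) (\<lambda>z. \<Sum>n. a n z) sequentially"
    by (rule Weierstrass_m_test_ev[OF le M])
  then have "uniform_limit (ball x d) (\<lambda>N z. \<Sum>n<N. a n z) (\<lambda>z. \<Sum>n. a n z) sequentially"
    by (rule uniform_limit_on_subset) auto
  then have "(\<lambda>N. (deriv ^^ k) (\<lambda>z. \<Sum>n<N. a n z) x) \<longlonglongrightarrow> (deriv ^^ k) (\<lambda>z. \<Sum>n. a n z) x"
    by (rule higher_deriv_complex_uniform_limit)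
       (use d ball_subset_cball in \<open>auto intro!: always_eventually holomorphic_intros
          holomorphic_on_subset[OF holo]\<close>)
  then show ?thesis
    unfolding sums_def using higher_deriv_sum[OF holo \<open>open U\<close> x] by simp
qed

section \<open>Euler's difference operator and alternating series\<close>

fun euler_diff :: "nat \<Rightarrow> (real \<Rightarrow> 'a::ab_group_add) \<Rightarrow> real \<Rightarrow> 'a" where
  "euler_diff 0 f = f"
| "euler_diff (Suc k) f = (\<lambda>x. euler_diff k f x - euler_diff k f (x + 1))"

lemma euler_diff_cmult:
  fixes f :: "real \<Rightarrow> 'a::ring"
  shows "euler_diff k (\<lambda>x. c * f x) x = c * euler_diff k f x"
  by (induction k arbitrary: x) (simp_all add: right_diff_distrib)

lemma euler_diff_has_vector_derivative:
  fixes f :: "real \<Rightarrow> 'a::real_normed_vector"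
  assumes "\<And>y. x \<le> y \<Longrightarrow> (f has_vector_derivative f' y) (at y)"
  shows "(euler_diff k f has_vector_derivative euler_diff k f' x) (at x)"
  using assms
proof (induction k arbitrary: x)
  case (Suc k)
  have "(euler_diff k f has_vector_derivative euler_diff k f' x) (at x)"
    using Suc by simp
  moreover have "((\<lambda>y. euler_diff k f (y + 1)) has_vector_derivative euler_diff k f' (x + 1)) (at x)"
  proof -
    have "(euler_diff k f has_vector_derivative euler_diff k f' (x + 1)) (at (x + 1))"
      using Suc by simp
    then have "(euler_diff k f \<circ> (\<lambda>y. y + 1) has_vector_derivative
        1 *\<^sub>R euler_diff k f' (x + 1)) (at x)"
      by (intro vector_diff_chain_at) (auto intro!: derivative_eq_intros)
    then show ?thesis
      by (simp add: o_def)
  qed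
  ultimately show ?case
    by (simp add: has_vector_derivative_diff)
qed simp

lemma sum_alternating_diff:
  fixes f :: "nat \<Rightarrow> 'a::comm_ring_1"
  shows "(\<Sum>n<N. (-1) ^ n * (f n - f (Suc n))) = 2 * (\<Sum>n<N. (-1) ^ n * f n) - f 0 + (-1) ^ N * f N"
proof (induction N)
  case (Suc N)
  have "(\<Sum>n<Suc N. (-1) ^ n * (f n - f (Suc n))) =
      2 * (\<Sum>n<N. (-1) ^ n * f n) - f 0 + (-1) ^ N * f N + (-1) ^ N * (f N - f (Suc N))"
    by (simp add: Suc.IH)
  also have "\<dots> = 2 * (\<Sum>n<Suc N. (-1) ^ n * f n) - f 0 + (-1) ^ Suc N * f (Suc N)"
    by (simp add: algebra_simps)
  finally show ?case .
qed simp

lemma sums_alternating_diff: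
  fixes f :: "nat \<Rightarrow> 'a::real_normed_field"
  assumes "(\<lambda>n. (-1) ^ n * f n) sums S"
  shows "(\<lambda>n. (-1) ^ n * (f n - f (Suc n))) sums (2 * S - f 0)"
proof -
  have "(\<lambda>n. (-1) ^ Suc n * f (Suc n)) sums (S - f 0)"
    using assms by (subst sums_Suc_iff) simp
  from sums_add[OF assms this]
  have "(\<lambda>n. (-1) ^ n * f n + (-1) ^ Suc n * f (Suc n)) sums (S + (S - f 0))" .
  moreover have "S + (S - f 0) = 2 * S - f 0"
    by (simp only: mult_2 add_diff_eq)
  ultimately show ?thesis
    by (simp add: right_diff_distrib)
qed

lemma sums_alternating_of_diff:
  fixes f :: "nat \<Rightarrow> 'a::real_normed_field"
  assumes "f \<longlonglongrightarrow> 0" and "(\<lambda>n. (-1) ^ n * (f n - f (Suc n))) sums T"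
  shows "(\<lambda>n. (-1) ^ n * f n) sums ((T + f 0) / 2)"
proof -
  have "(\<lambda>N. norm ((-1) ^ N * f N)) \<longlonglongrightarrow> 0"
    using tendsto_norm_zero[OF assms(1)] by (simp add: norm_mult norm_power)
  then have "(\<lambda>N. (-1) ^ N * f N) \<longlonglongrightarrow> 0"
    by (rule tendsto_norm_zero_cancel)
  then have "(\<lambda>N. ((\<Sum>n<N. (-1) ^ n * (f n - f (Suc n))) + f 0 - (-1) ^ N * f N) / 2)
      \<longlonglongrightarrow> (T + f 0 - 0) / 2"
    using assms(2) unfolding sums_def by (intro tendsto_intros) simp_all
  then show ?thesis
    unfolding sums_def sum_alternating_diff by simp
qed

section \<open>Analytic continuation of the alternating Hurwitz zeta function\<close>

definition shifted_powr :: "real \<Rightarrow> complex \<Rightarrow> real \<Rightarrow> complex" where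
  "shifted_powr q z x = complex_of_real (x + q) powr (- z)"

lemma holomorphic_shifted_powr: "(\<lambda>z. shifted_powr q z x) holomorphic_on A"
  unfolding shifted_powr_def by (intro holomorphic_intros)

lemma holomorphic_euler_diff_shifted_powr:
  "(\<lambda>z. euler_diff K (shifted_powr q z) x) holomorphic_on A"
  by (induction K arbitrary: x) (auto intro!: holomorphic_intros holomorphic_shifted_powr)

lemma shifted_powr_has_vector_derivative:
  assumes "0 < x + q"
  shows "(shifted_powr q z has_vector_derivative - z * shifted_powr q (z + 1) x) (at x)"
proof -
  have "complex_of_real (x + q) \<notin> \<real>\<^sub>\<le>\<^sub>0"
    using assms by (simp only: nonpos_Reals_of_real_iff not_le)
  then have "((\<lambda>w. w powr (- z)) has_field_derivative - z * complex_of_real (x + q) powr (- z - 1))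
      (at (complex_of_real (x + q)))"
    by (rule has_field_derivative_powr)
  moreover have "((\<lambda>x. complex_of_real (x + q)) has_vector_derivative 1) (at x)"
    using has_vector_derivative_real_field[OF DERIV_add[OF DERIV_ident DERIV_const]]
    by (simp only: of_real_add add_0_right)
  ultimately have "((\<lambda>w. w powr (- z)) \<circ> (\<lambda>x. complex_of_real (x + q)) has_vector_derivative
      1 * (- z * complex_of_real (x + q) powr (- z - 1))) (at x)"
    by (intro field_vector_diff_chain_at)
  moreover have "- z - 1 = - (z + 1)"
    by simp
  ultimately show ?thesis
    by (simp only: shifted_powr_def[abs_def] o_def mult_1_left)
qed

lemma euler_diff_shifted_powr_has_vector_derivative:
  assumes "0 < x + q"
  shows "(euler_diff K (shifted_powr q z) has_vector_derivative
           - z * euler_diff K (shifted_powr q (z + 1)) x) (at x)"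
proof -
  have "(euler_diff K (shifted_powr q z) has_vector_derivative
      euler_diff K (\<lambda>y. - z * shifted_powr q (z + 1) y) x) (at x)"
    using assms by (intro euler_diff_has_vector_derivative shifted_powr_has_vector_derivative) simp
  then show ?thesis
    by (simp only: euler_diff_cmult)
qed

lemma norm_euler_diff_shifted_powr_le:
  assumes "0 < x + q" and "0 \<le> Re z + K"
  shows "norm (euler_diff K (shifted_powr q z) x)
           \<le> (\<Prod>j<K. norm (z + of_nat j)) * (x + q) powr - (Re z + K)"
  using assms
proof (induction K arbitrary: z x)
  case 0
  then show ?case
    by (simp add: shifted_powr_def norm_powr_real_powr)
next
  case (Suc K)
  define B where "B = norm z * (\<Prod>j<K. norm (z + 1 + of_nat j)) * (x + q) powr - (Re z + 1 + K)"
  have "norm (euler_diff K (shifted_powr q z) x - euler_diff K (shifted_powr q z) (x + 1))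
      \<le> B * norm (x - (x + 1))"
  proof (rule differentiable_bound[OF convex_real_interval(5)])
    fix y assume y: "y \<in> {x..x + 1}"
    then have "0 < y + q"
      using Suc.prems by auto
    then show "(euler_diff K (shifted_powr q z) has_derivative
        (\<lambda>h. h *\<^sub>R (- z * euler_diff K (shifted_powr q (z + 1)) y))) (at y within {x..x + 1})"
      using euler_diff_shifted_powr_has_vector_derivative
      unfolding has_vector_derivative_def by (blast intro: has_derivative_at_withinI)
    have "norm (euler_diff K (shifted_powr q (z + 1)) y)
        \<le> (\<Prod>j<K. norm (z + 1 + of_nat j)) * (y + q) powr - (Re z + 1 + K)"
      using Suc.IH[of y "z + 1"] \<open>0 < y + q\<close> Suc.prems by (simp add: add_ac)
    also have "\<dots> \<le> (\<Prod>j<K. norm (z + 1 + of_nat j)) * (x + q) powr - (Re z + 1 + K)"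
      using y Suc.prems by (intro mult_left_mono powr_mono2' prod_nonneg) auto
    finally have "norm z * norm (euler_diff K (shifted_powr q (z + 1)) y) \<le> B"
      unfolding B_def by (simp add: mult.assoc mult_left_mono)
    moreover have "onorm (\<lambda>h. h *\<^sub>R (- z * euler_diff K (shifted_powr q (z + 1)) y))
        = norm z * norm (euler_diff K (shifted_powr q (z + 1)) y)"
      using onorm_scaleR_left[of "\<lambda>h::real. h" "- z * euler_diff K (shifted_powr q (z + 1)) y"]
      by (simp add: onorm_id norm_mult)
    ultimately show "onorm (\<lambda>h. h *\<^sub>R (- z * euler_diff K (shifted_powr q (z + 1)) y)) \<le> B"
      by simp
  qed auto
  also have "B * norm (x - (x + 1)) = (\<Prod>j<Suc K. norm (z + of_nat j)) * (x + q) powr - (Re z + Suc K)"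
    unfolding B_def prod.lessThan_Suc_shift by (simp add: add_ac)
  finally show ?case
    by simp
qed

definition euler_halfplane :: "nat \<Rightarrow> complex set" where
  "euler_halfplane K = {z. 1 - real K < Re z}"

lemma open_euler_halfplane: "open (euler_halfplane K)"
  unfolding euler_halfplane_def by (rule open_halfspace_Re_gt)

lemma euler_halfplane_mono: "K \<le> K' \<Longrightarrow> euler_halfplane K \<subseteq> euler_halfplane K'"
  by (auto simp: euler_halfplane_def)

lemma in_euler_halfplane_ceiling: "z \<in> euler_halfplane (nat \<lceil>- Re z\<rceil> + 2)"
  unfolding euler_halfplane_def by simp linarith

lemma norm_euler_diff_shifted_powr_le_powr:
  assumes "0 < q" and "1 \<le> x" and "0 \<le> s" and "s \<le> Re z + K"
  shows "norm (euler_diff K (shifted_powr q z) x) \<le> (\<Prod>j<K. norm (z + of_nat j)) * x powr - s"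
proof -
  have "norm (euler_diff K (shifted_powr q z) x)
      \<le> (\<Prod>j<K. norm (z + of_nat j)) * (x + q) powr - (Re z + K)"
    using assms by (intro norm_euler_diff_shifted_powr_le) auto
  also have "\<dots> \<le> (\<Prod>j<K. norm (z + of_nat j)) * x powr - s"
  proof (rule mult_left_mono)
    have "(x + q) powr - (Re z + K) \<le> x powr - (Re z + K)"
      using assms by (intro powr_mono2') auto
    also have "\<dots> \<le> x powr - s"
      using assms by (intro powr_mono) auto
    finally show "(x + q) powr - (Re z + K) \<le> x powr - s" .
  qed (auto intro: prod_nonneg)
  finally show ?thesis .
qed

lemma euler_diff_shifted_powr_local_bound:
  assumes q: "0 < q" and x: "x \<in> euler_halfplane K"
  shows "\<exists>d M. 0 < d \<and> cball x d \<subseteq> euler_halfplane K \<and> summable M \<and>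
     (\<forall>\<^sub>F n in sequentially. \<forall>y\<in>cball x d.
        norm ((-1) ^ n * euler_diff K (shifted_powr q y) (real n)) \<le> M n)"
proof -
  define d where "d = (Re x - (1 - real K)) / 2"
  define P where "P = (\<Prod>j<K. norm x + d + real j)"
  have d: "0 < d"
    using x by (simp add: euler_halfplane_def d_def)
  have Re_le: "Re x - d \<le> Re y" if "y \<in> cball x d" for y
    using that complex_Re_le_cmod[of "x - y"] by (simp add: dist_norm)
  have bound: "\<forall>y\<in>cball x d. norm ((-1) ^ n * euler_diff K (shifted_powr q y) (real n))
      \<le> P * real n powr - (1 + d)" if "1 \<le> n" for n
  proof
    fix y assume y: "y \<in> cball x d"
    have "norm y \<le> norm x + d"
      using y norm_triangle_sub[of y x] by (simp add: dist_norm norm_minus_commute)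
    then have "(\<Prod>j<K. norm (y + of_nat j)) \<le> P"
      unfolding P_def by (intro prod_mono) (auto intro: order_trans[OF norm_triangle_ineq])
    moreover have "1 + d \<le> Re y + K"
      using Re_le[OF y] by (simp add: d_def field_simps)
    ultimately show "norm ((-1) ^ n * euler_diff K (shifted_powr q y) (real n))
        \<le> P * real n powr - (1 + d)"
      using that d q norm_euler_diff_shifted_powr_le_powr[of q "real n" "1 + d" y K]
      by (force simp: norm_mult norm_power intro: order_trans mult_right_mono)
  qed
  have "cball x d \<subseteq> euler_halfplane K"
  proof
    fix y assume "y \<in> cball x d"
    then have "Re x - d \<le> Re y"
      by (rule Re_le)
    with d have "1 - real K < Re y"
      unfolding d_def by (simp add: field_simps)
    then show "y \<in> euler_halfplane K"
      by (simp add: euler_halfplane_def)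
  qed
  moreover have "summable (\<lambda>n. P * real n powr - (1 + d))"
    using d by (intro summable_mult) (simp add: summable_real_powr_iff)
  moreover have "\<forall>\<^sub>F n in sequentially. \<forall>y\<in>cball x d.
      norm ((-1) ^ n * euler_diff K (shifted_powr q y) (real n)) \<le> P * real n powr - (1 + d)"
    using bound by (rule eventually_mono[OF eventually_ge_at_top])
  ultimately show ?thesis
    using d by blast
qed

definition euler_tail :: "real \<Rightarrow> nat \<Rightarrow> complex \<Rightarrow> complex" where
  "euler_tail q K z = (\<Sum>n. (-1) ^ n * euler_diff K (shifted_powr q z) (real n))"

lemma holomorphic_euler_tail: "0 < q \<Longrightarrow> euler_tail q K holomorphic_on euler_halfplane K"
  unfolding euler_tail_def[abs_def]
  by (intro holomorphic_on_suminf open_euler_halfplane holomorphic_intros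
        holomorphic_euler_diff_shifted_powr euler_diff_shifted_powr_local_bound)

lemma higher_deriv_euler_tail_sums:
  assumes "0 < q" and "z \<in> euler_halfplane K"
  shows "(\<lambda>n. (deriv ^^ k) (\<lambda>z. (-1) ^ n * euler_diff K (shifted_powr q z) (real n)) z)
           sums (deriv ^^ k) (euler_tail q K) z"
  unfolding euler_tail_def[abs_def]
  by (rule higher_deriv_suminf_sums[OF open_euler_halfplane _
        euler_diff_shifted_powr_local_bound[OF assms(1)] assms(2)])
     (intro holomorphic_intros holomorphic_euler_diff_shifted_powr)

lemma euler_tail_sums:
  "0 < q \<Longrightarrow> z \<in> euler_halfplane K \<Longrightarrow>
    (\<lambda>n. (-1) ^ n * euler_diff K (shifted_powr q z) (real n)) sums euler_tail q K z"
  using higher_deriv_euler_tail_sums[where k = 0] by simp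

text \<open>K steps of Euler's transformation of the alternating series defining zeta_E.\<close>

definition euler_continuation :: "real \<Rightarrow> nat \<Rightarrow> complex \<Rightarrow> complex" where
  "euler_continuation q K z =
     (\<Sum>j<K. euler_diff j (shifted_powr q z) 0 / 2 ^ Suc j) + euler_tail q K z / 2 ^ K"

lemma euler_continuation_Suc:
  assumes "0 < q" and "z \<in> euler_halfplane K"
  shows "euler_continuation q (Suc K) z = euler_continuation q K z"
proof -
  have "(\<lambda>n. (-1) ^ n * euler_diff (Suc K) (shifted_powr q z) (real n))
      sums (2 * euler_tail q K z - euler_diff K (shifted_powr q z) 0)"
    using sums_alternating_diff[OF euler_tail_sums[OF assms]] by (simp add: add.commute)
  then have tail: "euler_tail q (Suc K) z = 2 * euler_tail q K z - euler_diff K (shifted_powr q z) 0"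
    unfolding euler_tail_def by (rule sums_unique[symmetric])
  show ?thesis
    unfolding euler_continuation_def tail by (simp add: field_simps)
qed

lemma euler_continuation_eq:
  assumes "0 < q" and "z \<in> euler_halfplane K" and "K \<le> K'"
  shows "euler_continuation q K' z = euler_continuation q K z"
  using assms(3)
proof (induction K' rule: dec_induct)
  case (step m)
  have "z \<in> euler_halfplane m"
    using euler_halfplane_mono[OF step.hyps(1)] assms(2) by blast
  with step.IH show ?case
    using euler_continuation_Suc[OF assms(1)] by simp
qed simp

lemma holomorphic_euler_continuation:
  "0 < q \<Longrightarrow> euler_continuation q K holomorphic_on euler_halfplane K"
  unfolding euler_continuation_def[abs_def]
  by (intro holomorphic_intros holomorphic_euler_tail holomorphic_euler_diff_shifted_powr) auto

definition zeta_E_cont :: "real \<Rightarrow> complex \<Rightarrow> complex" where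
  "zeta_E_cont q z = euler_continuation q (nat \<lceil>- Re z\<rceil> + 2) z"

lemma zeta_E_cont_eq_euler_continuation:
  assumes "0 < q" and "z \<in> euler_halfplane K"
  shows "zeta_E_cont q z = euler_continuation q K z"
proof (cases "K \<le> nat \<lceil>- Re z\<rceil> + 2")
  case True
  show ?thesis
    unfolding zeta_E_cont_def by (rule euler_continuation_eq[OF assms True])
next
  case False
  then have "nat \<lceil>- Re z\<rceil> + 2 \<le> K"
    by simp
  show ?thesis
    unfolding zeta_E_cont_def
    by (rule euler_continuation_eq[OF assms(1) in_euler_halfplane_ceiling \<open>_ \<le> K\<close>, symmetric])
qed

lemma holomorphic_zeta_E_cont:
  assumes "0 < q"
  shows "zeta_E_cont q holomorphic_on UNIV"
proof -
  have "zeta_E_cont q holomorphic_on (\<Union>K. euler_halfplane K)"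
  proof (rule holomorphic_on_UN_open)
    fix K
    show "zeta_E_cont q holomorphic_on euler_halfplane K"
      using holomorphic_euler_continuation[OF assms]
      by (rule holomorphic_transform) (simp add: zeta_E_cont_eq_euler_continuation[OF assms])
  qed (rule open_euler_halfplane)
  moreover have "(\<Union>K. euler_halfplane K) = UNIV"
    using in_euler_halfplane_ceiling by blast
  ultimately show ?thesis
    by simp
qed

lemma zeta_E_cont_sums:
  assumes q: "0 < q" and z: "0 < Re z"
  shows "(\<lambda>n. (-1) ^ n * complex_of_real (real n + q) powr (- z)) sums zeta_E_cont q z"
proof -
  define f where "f n = shifted_powr q z (real n)" for n
  have z1: "z \<in> euler_halfplane 1"
    using z by (simp add: euler_halfplane_def)
  have "(\<lambda>n. norm (f n)) \<longlonglongrightarrow> 0"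
  proof -
    have "filterlim (\<lambda>n. real n + q) at_top sequentially"
      using filterlim_tendsto_add_at_top[OF tendsto_const filterlim_real_sequentially, of q]
      by (simp add: add.commute)
    then have "(\<lambda>n. (real n + q) powr - Re z) \<longlonglongrightarrow> 0"
      using z by (intro tendsto_neg_powr) auto
    moreover have "norm (f n) = (real n + q) powr - Re z" for n
      using q by (simp add: f_def shifted_powr_def norm_powr_real_powr)
    ultimately show ?thesis
      by simp
  qed
  then have "f \<longlonglongrightarrow> 0"
    by (rule tendsto_norm_zero_cancel)
  moreover have "(\<lambda>n. (-1) ^ n * (f n - f (Suc n))) sums euler_tail q 1 z"
    using euler_tail_sums[OF q z1] by (simp add: f_def add.commute)
  ultimately have "(\<lambda>n. (-1) ^ n * f n) sums ((euler_tail q 1 z + f 0) / 2)"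
    by (rule sums_alternating_of_diff)
  moreover have "(euler_tail q 1 z + f 0) / 2 = zeta_E_cont q z"
    using zeta_E_cont_eq_euler_continuation[OF q z1]
    by (simp add: euler_continuation_def f_def add_divide_distrib)
  ultimately show ?thesis
    by (simp add: f_def shifted_powr_def)
qed

lemma zeta_E_eq_zeta_E_cont:
  assumes q: "0 < q"
  shows "zeta_E q = zeta_E_cont q"
  unfolding zeta_E_def
proof (rule the_equality)
  show "zeta_E_cont q holomorphic_on UNIV \<and> (\<forall>z. 0 < Re z \<longrightarrow>
      (\<lambda>n. (-1) ^ n * complex_of_real (real n + q) powr - z) sums zeta_E_cont q z)"
    using holomorphic_zeta_E_cont[OF q] zeta_E_cont_sums[OF q] by blast
next
  fix f
  assume f: "f holomorphic_on UNIV \<and> (\<forall>z. 0 < Re z \<longrightarrow>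
      (\<lambda>n. (-1) ^ n * complex_of_real (real n + q) powr - z) sums f z)"
  have "\<forall>\<^sub>F z in nhds 1. f z = zeta_E_cont q z"
  proof -
    have "\<forall>\<^sub>F z in nhds 1. z \<in> euler_halfplane 1"
      by (rule eventually_nhds_in_open[OF open_euler_halfplane]) (simp add: euler_halfplane_def)
    then show ?thesis
      by eventually_elim
         (use f zeta_E_cont_sums[OF q] sums_unique2 in \<open>force simp: euler_halfplane_def\<close>)
  qed
  then have "(deriv ^^ n) f 1 = (deriv ^^ n) (zeta_E_cont q) 1" for n
    by (rule higher_deriv_cong_ev) simp
  then show "f = zeta_E_cont q"
    using holomorphic_fun_eq_on_connected[OF _ holomorphic_zeta_E_cont[OF q] open_UNIV connected_UNIV]
      f by blast
qed

section \<open>The modified Stieltjes constants as an alternating series\<close>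

definition stieltjes_g :: "real \<Rightarrow> nat \<Rightarrow> real \<Rightarrow> real" where
  "stieltjes_g q l t = ln (t + q) ^ l / (t + q)"

lemma higher_deriv_exp_linear:
  "(deriv ^^ l) (\<lambda>z. exp (a * z)) = (\<lambda>z::complex. a ^ l * exp (a * z))"
proof (induction l)
  case (Suc l)
  have "(deriv ^^ Suc l) (\<lambda>z. exp (a * z)) = deriv (\<lambda>z. a ^ l * exp (a * z))"
    by (simp only: funpow.simps o_apply Suc.IH)
  also have "\<dots> = (\<lambda>z. a ^ Suc l * exp (a * z))"
    by (rule ext, rule DERIV_imp_deriv) (auto intro!: derivative_eq_intros)
  finally show ?case .
qed simp

lemma higher_deriv_shifted_powr_at_1:
  assumes "0 < x + q"
  shows "(deriv ^^ l) (\<lambda>z. shifted_powr q z x) 1 = (-1) ^ l * complex_of_real (stieltjes_g q l x)"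
proof -
  define L where "L = complex_of_real (ln (x + q))"
  have "(\<lambda>z. shifted_powr q z x) = (\<lambda>z. exp (- L * z))"
    using assms
    by (simp add: fun_eq_iff shifted_powr_def powr_def Ln_of_real L_def mult.commute del: of_real_add)
  then have "(deriv ^^ l) (\<lambda>z. shifted_powr q z x) 1 = (- L) ^ l * exp (- L * 1)"
    by (simp only: higher_deriv_exp_linear)
  also have "exp (- L * 1) = complex_of_real (exp (- ln (x + q)))"
    by (simp only: L_def mult_1_right of_real_minus[symmetric] exp_of_real)
  also have "exp (- ln (x + q)) = 1 / (x + q)"
    using assms by (simp add: exp_minus inverse_eq_divide)
  finally show ?thesis
    by (simp add: stieltjes_g_def L_def power_minus[of "complex_of_real (ln (x + q))"] divide_inverse)
qed

lemma higher_deriv_euler_diff_shifted_powr_at_1: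
  assumes "0 < x + q"
  shows "(deriv ^^ l) (\<lambda>z. euler_diff 1 (shifted_powr q z) x) 1
           = (-1) ^ l * complex_of_real (stieltjes_g q l x - stieltjes_g q l (x + 1))"
proof -
  have "(deriv ^^ l) (\<lambda>z. shifted_powr q z x - shifted_powr q z (x + 1)) 1
      = (deriv ^^ l) (\<lambda>z. shifted_powr q z x) 1 - (deriv ^^ l) (\<lambda>z. shifted_powr q z (x + 1)) 1"
    by (rule higher_deriv_diff[where S = UNIV, OF holomorphic_shifted_powr holomorphic_shifted_powr])
       auto
  with assms show ?thesis
    by (simp add: higher_deriv_shifted_powr_at_1 right_diff_distrib)
qed

lemma higher_deriv_zeta_E_at_1:
  assumes q: "0 < q"
  shows "(deriv ^^ l) (zeta_E q) 1
           = ((deriv ^^ l) (\<lambda>z. shifted_powr q z 0) 1 + (deriv ^^ l) (euler_tail q 1) 1) / 2"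
proof -
  have one: "1 \<in> euler_halfplane 1"
    by (simp add: euler_halfplane_def)
  have "\<forall>\<^sub>F z in nhds 1. zeta_E q z = (1 / 2) * (shifted_powr q z 0 + euler_tail q 1 z)"
    using eventually_nhds_in_open[OF open_euler_halfplane one]
    by eventually_elim
       (simp add: zeta_E_eq_zeta_E_cont[OF q] zeta_E_cont_eq_euler_continuation[OF q]
          euler_continuation_def field_simps)
  then have "(deriv ^^ l) (zeta_E q) 1
      = (deriv ^^ l) (\<lambda>z. (1 / 2) * (shifted_powr q z 0 + euler_tail q 1 z)) 1"
    by (rule higher_deriv_cong_ev) simp
  also have "\<dots> = (1 / 2) * (deriv ^^ l) (\<lambda>z. shifted_powr q z 0 + euler_tail q 1 z) 1"
    by (intro higher_deriv_cmult[OF _ one open_euler_halfplane] holomorphic_intros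
          holomorphic_shifted_powr holomorphic_euler_tail q)
  also have "(deriv ^^ l) (\<lambda>z. shifted_powr q z 0 + euler_tail q 1 z) 1
      = (deriv ^^ l) (\<lambda>z. shifted_powr q z 0) 1 + (deriv ^^ l) (euler_tail q 1) 1"
    by (rule higher_deriv_add[OF holomorphic_shifted_powr holomorphic_euler_tail[OF q]
          open_euler_halfplane one])
  finally show ?thesis
    by simp
qed

lemma higher_deriv_euler_tail_at_1_sums:
  assumes q: "0 < q"
  shows "(\<lambda>n. complex_of_real ((-1) ^ n * (stieltjes_g q l (real n) - stieltjes_g q l (real n + 1))))
           sums ((-1) ^ l * (deriv ^^ l) (euler_tail q 1) 1)"
proof -
  have one: "1 \<in> euler_halfplane 1"
    by (simp add: euler_halfplane_def)
  have "(deriv ^^ l) (\<lambda>z. (-1) ^ n * euler_diff 1 (shifted_powr q z) (real n)) 1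
      = (-1) ^ l * complex_of_real ((-1) ^ n * (stieltjes_g q l (real n) - stieltjes_g q l (real n + 1)))"
    for n
  proof -
    have "(deriv ^^ l) (\<lambda>z. (-1) ^ n * euler_diff 1 (shifted_powr q z) (real n)) 1
        = (-1) ^ n * (deriv ^^ l) (\<lambda>z. euler_diff 1 (shifted_powr q z) (real n)) 1"
      by (rule higher_deriv_cmult[where A = UNIV, OF holomorphic_euler_diff_shifted_powr]) auto
    moreover have "0 < real n + q"
      using q by simp
    ultimately show ?thesis
      using higher_deriv_euler_diff_shifted_powr_at_1[of "real n" q l] by simp
  qed
  with higher_deriv_euler_tail_sums[OF q one, of l]
  have "(\<lambda>n. (-1) ^ l * complex_of_real ((-1) ^ n *
      (stieltjes_g q l (real n) - stieltjes_g q l (real n + 1)))) sums (deriv ^^ l) (euler_tail q 1) 1"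
    by simp
  from sums_mult[OF this, of "(-1) ^ l"] show ?thesis
    by (simp add: mult.assoc[symmetric] flip: power_mult_distrib)
qed

lemma mod_stieltjes_eq_series:
  assumes q: "0 < q"
  shows "summable (\<lambda>n. (-1) ^ n * (stieltjes_g q l (real n) - stieltjes_g q l (real n + 1)))"
    and "mod_stieltjes l q = complex_of_real ((stieltjes_g q l 0
           + (\<Sum>n. (-1) ^ n * (stieltjes_g q l (real n) - stieltjes_g q l (real n + 1)))) / 2)"
proof -
  define u where "u n = (-1) ^ n * (stieltjes_g q l (real n) - stieltjes_g q l (real n + 1))" for n
  define T where "T = (-1) ^ l * (deriv ^^ l) (euler_tail q 1) 1"
  have of_real_u_sums: "(\<lambda>n. complex_of_real (u n)) sums T"
    unfolding u_def T_def by (rule higher_deriv_euler_tail_at_1_sums[OF q])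
  then have u_sums: "u sums Re T"
    using sums_Re by fastforce
  have "T = complex_of_real (Re T)"
    using sums_unique2[OF of_real_u_sums sums_of_real[OF u_sums]] .
  also have "Re T = (\<Sum>n. u n)"
    using u_sums by (rule sums_unique)
  finally have T: "T = complex_of_real (\<Sum>n. u n)" .
  have "mod_stieltjes l q = ((-1) ^ l * (-1) ^ l * complex_of_real (stieltjes_g q l 0) + T) / 2"
    using q by (simp add: mod_stieltjes_def higher_deriv_zeta_E_at_1 higher_deriv_shifted_powr_at_1
        T_def algebra_simps)
  also have "(-1) ^ l * (-1) ^ l = (1::complex)"
    by (simp flip: power_mult_distrib)
  finally show "mod_stieltjes l q = complex_of_real ((stieltjes_g q l 0 + (\<Sum>n. u n)) / 2)"
    unfolding T by (simp add: add_divide_distrib)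
  show "summable u"
    using u_sums by (rule sums_summable)
qed

section \<open>Integrals against the quasi-periodic Euler function\<close>

lemma E0bar_minus_eq:
  assumes "real n < t" and "t \<le> real n + 1"
  shows "E0bar (- t) = (-1) ^ Suc n"
proof -
  have "\<lfloor>- t\<rfloor> = - int n - 1"
    using assms by (intro floor_unique) auto
  then show ?thesis
    unfolding E0bar_def by (auto simp: even_minus)
qed

lemma has_integral_E0bar_minus_mult_deriv:
  fixes f f' :: "real \<Rightarrow> real"
  assumes "\<And>t. t \<in> {real n..real n + 1} \<Longrightarrow> (f has_real_derivative f' t) (at t within {real n..real n + 1})"
  shows "((\<lambda>t. E0bar (- t) * f' t) has_integral (-1) ^ n * (f (real n) - f (real n + 1)))
           {real n..real n + 1}"
proof -
  have "(f' has_integral f (real n + 1) - f (real n)) {real n..real n + 1}"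
    using assms by (intro fundamental_theorem_of_calculus)
       (auto simp flip: has_real_derivative_iff_has_vector_derivative)
  then have "((\<lambda>t. (-1) ^ Suc n * f' t) has_integral (-1) ^ Suc n * (f (real n + 1) - f (real n)))
      {real n..real n + 1}"
    by (rule has_integral_mult_right)
  then have "((\<lambda>t. E0bar (- t) * f' t) has_integral (-1) ^ Suc n * (f (real n + 1) - f (real n)))
      {real n..real n + 1}"
  proof (rule has_integral_spike_finite[where S = "{real n}", rotated 2])
    fix t assume "t \<in> {real n..real n + 1} - {real n}"
    then have "real n < t" and "t \<le> real n + 1"
      by auto
    then show "E0bar (- t) * f' t = (-1) ^ Suc n * f' t"
      by (simp add: E0bar_minus_eq)
  qed simp
  then show ?thesis
    by (simp add: algebra_simps)
qed

lemma has_integral_E0bar_minus_mult_deriv_sum: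
  fixes f f' :: "real \<Rightarrow> real"
  assumes "\<And>t. real a \<le> t \<Longrightarrow> (f has_real_derivative f' t) (at t)"
  shows "((\<lambda>t. E0bar (- t) * f' t) has_integral
           (\<Sum>i<N. (-1) ^ (a + i) * (f (real (a + i)) - f (real (a + i) + 1))))
           {real a..real a + real N}"
proof (induction N)
  case (Suc N)
  have "((\<lambda>t. E0bar (- t) * f' t) has_integral
      (-1) ^ (a + N) * (f (real (a + N)) - f (real (a + N) + 1)))
      {real a + real N..real a + real N + 1}"
    using has_integral_E0bar_minus_mult_deriv[of "a + N" f f'] assms
    by (simp add: has_field_derivative_at_within)
  from has_integral_combine[OF _ _ Suc.IH this] show ?case
    by (simp add: add_ac)
qed (use has_integral_refl(2)[of "\<lambda>t. E0bar (- t) * f' t" "real a"] in simp)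

lemma integrable_abs_deriv_atLeast:
  fixes f f' :: "real \<Rightarrow> real"
  assumes deriv: "\<And>t. a \<le> t \<Longrightarrow> (f has_real_derivative f' t) (at t)"
    and cont: "continuous_on {a..} f'"
    and nonpos: "\<And>t. T \<le> t \<Longrightarrow> f' t \<le> 0"
    and lim: "(f \<longlongrightarrow> L) at_top"
  shows "(\<lambda>t. \<bar>f' t\<bar>) integrable_on {a..}"
proof -
  define T' where "T' = max a T"
  have int: "(\<lambda>t. \<bar>f' t\<bar>) integrable_on {a..y}" for y
    by (intro integrable_continuous_real continuous_on_rabs continuous_on_subset[OF cont]) auto
  have FTC: "(f' has_integral f y - f T') {T'..y}" if "T' \<le> y" for y
    using that deriv by (intro fundamental_theorem_of_calculus)
       (auto simp: T'_def has_real_derivative_iff_has_vector_derivative[symmetric]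
             intro: has_field_derivative_at_within)
  have "integral {a..y} (\<lambda>t. \<bar>f' t\<bar>) = integral {a..T'} (\<lambda>t. \<bar>f' t\<bar>) + (f T' - f y)"
    if "T' \<le> y" for y
  proof -
    have "integral {a..y} (\<lambda>t. \<bar>f' t\<bar>)
        = integral {a..T'} (\<lambda>t. \<bar>f' t\<bar>) + integral {T'..y} (\<lambda>t. \<bar>f' t\<bar>)"
      by (rule Henstock_Kurzweil_Integration.integral_combine[symmetric])
         (use that int in \<open>auto simp: T'_def\<close>)
    also have "integral {T'..y} (\<lambda>t. \<bar>f' t\<bar>) = integral {T'..y} (\<lambda>t. - f' t)"
      using nonpos by (intro integral_cong) (auto simp: T'_def)
    also have "\<dots> = f T' - f y"
      using integral_unique[OF has_integral_neg[OF FTC[OF that]]] by simp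
    finally show ?thesis .
  qed
  then have "\<forall>\<^sub>F y in at_top. integral {a..y} (\<lambda>t. \<bar>f' t\<bar>)
      = integral {a..T'} (\<lambda>t. \<bar>f' t\<bar>) + (f T' - f y)"
    using eventually_ge_at_top by (rule eventually_mono[rotated]) blast
  moreover have "((\<lambda>y. integral {a..T'} (\<lambda>t. \<bar>f' t\<bar>) + (f T' - f y))
      \<longlongrightarrow> integral {a..T'} (\<lambda>t. \<bar>f' t\<bar>) + (f T' - L)) at_top"
    by (intro tendsto_intros lim)
  ultimately have "((\<lambda>y. integral {a..y} (\<lambda>t. \<bar>f' t\<bar>))
      \<longlongrightarrow> integral {a..T'} (\<lambda>t. \<bar>f' t\<bar>) + (f T' - L)) at_top"
    by (rule iffD2[OF tendsto_cong])
  then show ?thesis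
    using int by (intro has_integral_integrable[OF has_integral_to_inf]) auto
qed

lemma E0bar_minus_mult_deriv_integral:
  fixes f f' :: "real \<Rightarrow> real"
  assumes deriv: "\<And>t. real a \<le> t \<Longrightarrow> (f has_real_derivative f' t) (at t)"
    and abs_int: "(\<lambda>t. \<bar>f' t\<bar>) integrable_on {real a..}"
  shows "(\<lambda>t. E0bar (- t) * f' t) integrable_on {real a..}"
    and "(\<lambda>i. (-1) ^ (a + i) * (f (real (a + i)) - f (real (a + i) + 1)))
           sums integral {real a..} (\<lambda>t. E0bar (- t) * f' t)"
proof -
  define F where "F t = E0bar (- t) * f' t" for t
  define F_trunc where "F_trunc k t = (if t \<in> {real a..real a + real k} then F t else 0)" for k t
  have "(F_trunc k has_integral (\<Sum>i<k. (-1) ^ (a + i) * (f (real (a + i)) - f (real (a + i) + 1))))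
      {real a..}" for k
    unfolding F_trunc_def F_def
    by (rule has_integral_restrict[of "{real a..real a + real k}" "{real a..}", THEN iffD2])
       (use has_integral_E0bar_minus_mult_deriv_sum[where a = a and N = k, OF deriv] in auto)
  note F_trunc_integral = this
  have trunc_integrable: "F_trunc k integrable_on {real a..}" for k
    using F_trunc_integral by blast
  have trunc_le: "norm (F_trunc k t) \<le> \<bar>f' t\<bar>" if "t \<in> {real a..}" for k t
    by (auto simp: F_trunc_def F_def E0bar_def abs_mult)
  have trunc_tendsto: "(\<lambda>k. F_trunc k t) \<longlonglongrightarrow> F t" if "t \<in> {real a..}" for t
  proof (rule tendsto_eventually)
    have "\<forall>\<^sub>F k in sequentially. t - real a \<le> real k"
      by (rule eventually_sequentiallyI[of "nat \<lceil>t - real a\<rceil>"]) linarith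
    then show "\<forall>\<^sub>F k in sequentially. F_trunc k t = F t"
      by eventually_elim (use that in \<open>auto simp: F_trunc_def\<close>)
  qed
  note limit = dominated_convergence[OF trunc_integrable abs_int trunc_le trunc_tendsto]
  show "(\<lambda>t. E0bar (- t) * f' t) integrable_on {real a..}"
    using limit(1) by (simp add: F_def[abs_def])
  show "(\<lambda>i. (-1) ^ (a + i) * (f (real (a + i)) - f (real (a + i) + 1)))
      sums integral {real a..} (\<lambda>t. E0bar (- t) * f' t)"
    using limit(2) unfolding sums_def F_def[abs_def] integral_unique[OF F_trunc_integral] .
qed

section \<open>The integral formula\<close>

lemma stieltjes_g_has_real_derivative:
  assumes "0 < t + q"
  shows "(stieltjes_g q l has_real_derivative
           (real l * ln (t + q) ^ (l - 1) - ln (t + q) ^ l) / (t + q) ^ 2) (at t)"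
proof -
  have "((\<lambda>t. ln (t + q) ^ l / (t + q)) has_real_derivative
      (real l * ln (t + q) ^ (l - 1) * (1 / (t + q)) * (t + q) - ln (t + q) ^ l * 1)
        / ((t + q) * (t + q))) (at t)"
    using assms by (auto intro!: derivative_eq_intros)
  then show ?thesis
    using assms by (simp add: stieltjes_g_def[abs_def] power2_eq_square)
qed

lemma deriv_stieltjes_g:
  "0 < t + q \<Longrightarrow>
    deriv (stieltjes_g q l) t = (real l * ln (t + q) ^ (l - 1) - ln (t + q) ^ l) / (t + q) ^ 2"
  by (rule DERIV_imp_deriv[OF stieltjes_g_has_real_derivative])

lemma continuous_on_deriv_stieltjes_g:
  assumes "0 < a + q"
  shows "continuous_on {a..} (deriv (stieltjes_g q l))"
proof -
  have "continuous_on {a..} (\<lambda>t. (real l * ln (t + q) ^ (l - 1) - ln (t + q) ^ l) / (t + q) ^ 2)"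
    using assms by (intro continuous_intros) auto
  then show ?thesis
    by (rule continuous_on_eq) (use assms in \<open>simp add: deriv_stieltjes_g\<close>)
qed

lemma deriv_stieltjes_g_nonpos:
  assumes "exp (real l) \<le> t + q"
  shows "deriv (stieltjes_g q l) t \<le> 0"
proof -
  have "0 < t + q"
    using assms exp_gt_zero[of "real l"] by linarith
  have "real l \<le> ln (t + q)"
    using assms by (metis exp_gt_zero ln_exp ln_le_cancel_iff order_less_le_trans)
  then have "real l * ln (t + q) ^ (l - 1) \<le> ln (t + q) ^ l"
    by (cases l) (auto intro: mult_right_mono)
  with \<open>0 < t + q\<close> show ?thesis
    by (simp add: deriv_stieltjes_g divide_nonpos_nonneg)
qed

lemma stieltjes_g_tendsto_0: "(stieltjes_g q l \<longlongrightarrow> 0) at_top"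
proof -
  have "filterlim (\<lambda>t. t + q) at_top at_top"
    using filterlim_tendsto_add_at_top[OF tendsto_const filterlim_ident, of q] by (simp add: add.commute)
  then have "filterlim (\<lambda>t. ln (t + q)) at_top at_top"
    by (rule filterlim_compose[OF ln_at_top])
  then have "((\<lambda>t. ln (t + q) ^ l / exp (ln (t + q))) \<longlongrightarrow> 0) at_top"
    by (rule filterlim_compose[OF tendsto_power_div_exp_0])
  moreover have "\<forall>\<^sub>F t in at_top. ln (t + q) ^ l / exp (ln (t + q)) = stieltjes_g q l t"
    using eventually_gt_at_top[of "- q"] by eventually_elim (simp add: stieltjes_g_def)
  ultimately show ?thesis
    by (rule Lim_transform_eventually)
qed

lemma mod_stieltjes_integral_formula:
  assumes q: "0 < q"
  shows "(\<lambda>t. E0bar (- t) * deriv (stieltjes_g q l) t) integrable_on {real \<alpha>..}"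
    and "mod_stieltjes l q = complex_of_real
           ((\<Sum>n=0..\<alpha>. (-1) ^ n * stieltjes_g q l (real n)) - (-1) ^ \<alpha> * stieltjes_g q l (real \<alpha>) / 2
            + integral {real \<alpha>..} (\<lambda>t. E0bar (- t) * deriv (stieltjes_g q l) t) / 2)"
proof -
  define g where "g n = stieltjes_g q l (real n)" for n
  define u where "u n = (-1) ^ n * (g n - g (Suc n))" for n
  define I where "I = integral {real \<alpha>..} (\<lambda>t. E0bar (- t) * deriv (stieltjes_g q l) t)"
  have deriv: "(stieltjes_g q l has_real_derivative deriv (stieltjes_g q l) t) (at t)"
    if "real \<alpha> \<le> t" for t
    using that q stieltjes_g_has_real_derivative[of t q l] by (simp add: deriv_stieltjes_g)
  have "(\<lambda>t. \<bar>deriv (stieltjes_g q l) t\<bar>) integrable_on {real \<alpha>..}"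
    by (rule integrable_abs_deriv_atLeast[OF deriv _ _ stieltjes_g_tendsto_0, where T = "exp (real l)"])
       (use q in \<open>auto intro: continuous_on_deriv_stieltjes_g deriv_stieltjes_g_nonpos\<close>)
  note integral = E0bar_minus_mult_deriv_integral[OF deriv this]
  show "(\<lambda>t. E0bar (- t) * deriv (stieltjes_g q l) t) integrable_on {real \<alpha>..}"
    by (rule integral(1))
  have "u = (\<lambda>n. (-1) ^ n * (stieltjes_g q l (real n) - stieltjes_g q l (real n + 1)))"
    by (simp add: fun_eq_iff u_def g_def add.commute)
  then have "summable u" and "mod_stieltjes l q = complex_of_real ((g 0 + (\<Sum>n. u n)) / 2)"
    using mod_stieltjes_eq_series[OF q, of l] by (simp_all add: g_def)
  moreover have "(\<lambda>i. u (i + \<alpha>)) sums I"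
    using integral(2) by (simp add: I_def u_def g_def add.commute)
  ultimately have "mod_stieltjes l q = complex_of_real ((g 0 + (\<Sum>n<\<alpha>. u n) + I) / 2)"
    by (simp add: suminf_split_initial_segment[of u \<alpha>] sums_unique[symmetric] add_ac)
  also have "g 0 + (\<Sum>n<\<alpha>. u n) = 2 * (\<Sum>n<\<alpha>. (-1) ^ n * g n) + (-1) ^ \<alpha> * g \<alpha>"
    unfolding u_def sum_alternating_diff by simp
  also have "(2 * (\<Sum>n<\<alpha>. (-1) ^ n * g n) + (-1) ^ \<alpha> * g \<alpha> + I) / 2
      = (\<Sum>n=0..\<alpha>. (-1) ^ n * g n) - (-1) ^ \<alpha> * g \<alpha> / 2 + I / 2"
    by (simp add: atLeast0AtMost lessThan_Suc_atMost[symmetric] field_simps)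
  finally show "mod_stieltjes l q = complex_of_real
      ((\<Sum>n=0..\<alpha>. (-1) ^ n * stieltjes_g q l (real n)) - (-1) ^ \<alpha> * stieltjes_g q l (real \<alpha>) / 2
       + integral {real \<alpha>..} (\<lambda>t. E0bar (- t) * deriv (stieltjes_g q l) t) / 2)"
    unfolding I_def g_def .
qed

lemma mod_stieltjes_nat_series:
  fixes q :: nat
  assumes "1 \<le> q"
  shows "summable (\<lambda>i. (-1) ^ (i + q + 1) *
           (stieltjes_g 0 l (real (i + q) + 1) - stieltjes_g 0 l (real (i + q))))"
    and "mod_stieltjes l q = complex_of_real (stieltjes_g 0 l (real q) / 2 + (-1) ^ q / 2 *
           (\<Sum>i. (-1) ^ (i + q + 1) * (stieltjes_g 0 l (real (i + q) + 1) - stieltjes_g 0 l (real (i + q)))))"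
proof -
  define u where "u n = (-1) ^ n * (stieltjes_g q l (real n) - stieltjes_g q l (real n + 1))" for n
  have "summable u" and mod_eq: "mod_stieltjes l q = complex_of_real ((stieltjes_g q l 0 + (\<Sum>n. u n)) / 2)"
    using mod_stieltjes_eq_series[of "real q" l] assms by (simp_all add: u_def[abs_def])
  have "(-1) ^ (i + q + 1) * (stieltjes_g 0 l (real (i + q) + 1) - stieltjes_g 0 l (real (i + q)))
      = (-1) ^ q * u i" for i
    by (simp add: u_def stieltjes_g_def power_add add_ac mult_ac right_diff_distrib)
  moreover have "(-1) ^ q / 2 * ((-1) ^ q * S) = S / (2::real)" for S
    by (simp flip: power_mult_distrib)
  ultimately show "summable (\<lambda>i. (-1) ^ (i + q + 1) *
           (stieltjes_g 0 l (real (i + q) + 1) - stieltjes_g 0 l (real (i + q))))"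
    and "mod_stieltjes l q = complex_of_real (stieltjes_g 0 l (real q) / 2 + (-1) ^ q / 2 *
           (\<Sum>i. (-1) ^ (i + q + 1) * (stieltjes_g 0 l (real (i + q) + 1) - stieltjes_g 0 l (real (i + q)))))"
    using \<open>summable u\<close> mod_eq
    by (simp_all add: summable_mult suminf_mult stieltjes_g_def add_divide_distrib)
qed

theorem theorem3p6:
  shows "(\<forall>(q::real) (l::nat) (\<alpha>::nat). q > 0 \<longrightarrow>
      (let g = (\<lambda>t::real. ln (t + q) ^ l / (t + q)) in
        (\<lambda>t. E0bar (- t) * deriv g t) integrable_on {real \<alpha>..} \<and>
        mod_stieltjes l q =
          complex_of_real
           ((\<Sum>n=0..\<alpha>. (-1) ^ n * (ln (real n + q) ^ l / (real n + q)))
            - (-1) ^ \<alpha> * (ln (real \<alpha> + q) ^ l / (2 * (real \<alpha> + q)))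
            + 1/2 * integral {real \<alpha>..} (\<lambda>t. E0bar (- t) * deriv g t))))
   \<and> (\<forall>(q::nat) (l::nat). q \<ge> 1 \<longrightarrow>
      (let d = (\<lambda>j::nat. (-1) ^ (j + 1) *
                 (ln (real j + 1) ^ l / (real j + 1) - ln (real j) ^ l / real j)) in
        summable (\<lambda>i. d (i + q)) \<and>
        mod_stieltjes l (real q) =
          complex_of_real
           (ln (real q) ^ l / (2 * real q) + (-1) ^ q / 2 * (\<Sum>i. d (i + q)))))"
proof (intro conjI allI impI)
  fix q :: real and l \<alpha> :: nat
  assume "0 < q"
  have g: "(\<lambda>t. ln (t + q) ^ l / (t + q)) = stieltjes_g q l"
    by (simp add: fun_eq_iff stieltjes_g_def)
  show "let g = \<lambda>t. ln (t + q) ^ l / (t + q) in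
      (\<lambda>t. E0bar (- t) * deriv g t) integrable_on {real \<alpha>..} \<and>
      mod_stieltjes l q = complex_of_real
        ((\<Sum>n=0..\<alpha>. (-1) ^ n * (ln (real n + q) ^ l / (real n + q)))
         - (-1) ^ \<alpha> * (ln (real \<alpha> + q) ^ l / (2 * (real \<alpha> + q)))
         + 1/2 * integral {real \<alpha>..} (\<lambda>t. E0bar (- t) * deriv g t))"
    unfolding Let_def g using mod_stieltjes_integral_formula[OF \<open>0 < q\<close>, of l \<alpha>]
    by (simp add: stieltjes_g_def)
next
  fix q l :: nat
  assume "1 \<le> q"
  show "let d = \<lambda>j. (-1) ^ (j + 1) *
      (ln (real j + 1) ^ l / (real j + 1) - ln (real j) ^ l / real j) in
      summable (\<lambda>i. d (i + q)) \<and>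
      mod_stieltjes l (real q) = complex_of_real
        (ln (real q) ^ l / (2 * real q) + (-1) ^ q / 2 * (\<Sum>i. d (i + q)))"
    unfolding Let_def using mod_stieltjes_nat_series[OF \<open>1 \<le> q\<close>, of l]
    by (simp add: stieltjes_g_def)
qed

end
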